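(* Let $V\subset A_N$ be a maximal totally singular subspace. Then $f_V\in\mathbb C[A_N]^{SL(2,\mathbb Z)}$, and $f_V$ is, up to a constant multiple, the unique vector of $\mathbb C[A_N]$ on which every transvection $t_\alpha$ with $\alpha\in V$, $q_N(\alpha)=1$, acts as $-1$.
   Context: $N=U\oplus U(2)\oplus D_4\oplus D_4$ ($U$ hyperbolic plane, $D_4$ negative definite, $U(2)$ doubled form); $A_N=N^*/N\cong\mathbb F_2^6$ with $q_N(x)=\langle x,x\rangle\bmod2\mathbb Z\in\mathbb Z/2\mathbb Z$, bilinear form $b_N(x,y)=2\langle x,y\rangle\bmod2$; $(A_N,q_N)\cong u^{\oplus3}$ with $u$ the hyperbolic plane over $\mathbb F_2$. Weil representation on $\mathbb C[A_N]$ (basis $e_\alpha$): $Te_\alpha=(-1)^{q_N(\alpha)}e_\alpha$, $Se_\alpha=\frac18\sum_\beta(-1)^{b_N(\beta,\alpha)}e_\beta$ for $T=\begin{pmatrix}1&1\\0&1\end{pmatrix}$, $S=\begin{pmatrix}0&-1\\1&0\end{pmatrix}$. $O(q_N)$ acts on $\mathbb C[A_N]$ by $g(e_\alpha)=e_{g(\alpha)}$. For $\alpha$ with $q_N(\alpha)=1$ the transvection is $t_\alpha(x)=x+b_N(x,\alpha)\alpha\in O(q_N)$. A 3-dimensional subspace $V\subset A_N$ is maximal totally singular if $(V,q_N|_V)\cong(\mathbb F_2^3,\ x\mapsto x_1+x_2+x_3)$. For such $V$, $I=\ker(q_N|_V)$ is a 2-dimensional totally isotropic subspace, contained in exactly two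 maximal (3-dimensional) totally isotropic subspaces $I^+,I^-$, and $f_V:=\sum_{\alpha\in I^+}e_\alpha-\sum_{\alpha\in I^-}e_\alpha$ (defined up to sign). *)

theory Defs
  imports Complex_Main
begin

text \<open>Model of the discriminant form (A_N, q_N) = u^3 over F_2.
  Vectors of F_2^n are functions nat => bool supported on {0..<n}; True = 1.\<close>

definition F2vec :: "nat \<Rightarrow> (nat \<Rightarrow> bool) set" where
  "F2vec n = {x. \<forall>i. n \<le> i \<longrightarrow> \<not> x i}"

definition AN :: "(nat \<Rightarrow> bool) set" where
  "AN = F2vec 6"

definition vadd :: "(nat \<Rightarrow> bool) \<Rightarrow> (nat \<Rightarrow> bool) \<Rightarrow> (nat \<Rightarrow> bool)" where
  "vadd x y = (\<lambda>i. x i \<noteq> y i)"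

definition qN :: "(nat \<Rightarrow> bool) \<Rightarrow> bool" where
  "qN x = (((x 0 \<and> x 1) \<noteq> (x 2 \<and> x 3)) \<noteq> (x 4 \<and> x 5))"

definition bN :: "(nat \<Rightarrow> bool) \<Rightarrow> (nat \<Rightarrow> bool) \<Rightarrow> bool" where
  "bN x y = ((qN (vadd x y) \<noteq> qN x) \<noteq> qN y)"

definition sgn2 :: "bool \<Rightarrow> complex" where
  "sgn2 b = (if b then -1 else 1)"

text \<open>C[A_N]: a vector f has coefficient f alpha at e_alpha; zero outside A_N.\<close>
definition CA :: "((nat \<Rightarrow> bool) \<Rightarrow> complex) set" where
  "CA = {f. \<forall>x. x \<notin> AN \<longrightarrow> f x = 0}"

definition weilT :: "((nat \<Rightarrow> bool) \<Rightarrow> complex) \<Rightarrow> ((nat \<Rightarrow> bool) \<Rightarrow> complex)" where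
  "weilT f = (\<lambda>b. if b \<in> AN then sgn2 (qN b) * f b else 0)"

definition weilS :: "((nat \<Rightarrow> bool) \<Rightarrow> complex) \<Rightarrow> ((nat \<Rightarrow> bool) \<Rightarrow> complex)" where
  "weilS f = (\<lambda>b. if b \<in> AN then (1/8) * (\<Sum>a\<in>AN. sgn2 (bN b a) * f a) else 0)"

text \<open>The image of SL(2,Z) under the Weil representation: the group generated by
  the images of the generators S, T (a monoid suffices as both have finite order).\<close>
inductive_set weil_image :: "(((nat \<Rightarrow> bool) \<Rightarrow> complex) \<Rightarrow> ((nat \<Rightarrow> bool) \<Rightarrow> complex)) set" where
  id_in: "id \<in> weil_image"
| S_in: "g \<in> weil_image \<Longrightarrow> weilS \<circ> g \<in> weil_image"
| T_in: "g \<in> weil_image \<Longrightarrow> weilT \<circ> g \<in> weil_image"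

definition SL2Z_invariant :: "((nat \<Rightarrow> bool) \<Rightarrow> complex) \<Rightarrow> bool" where
  "SL2Z_invariant f = (f \<in> CA \<and> (\<forall>g\<in>weil_image. g f = f))"

text \<open>Permutation action of g in O(q_N): g(e_a) = e_{g(a)}.\<close>
definition perm_act :: "((nat \<Rightarrow> bool) \<Rightarrow> (nat \<Rightarrow> bool)) \<Rightarrow> ((nat \<Rightarrow> bool) \<Rightarrow> complex) \<Rightarrow> ((nat \<Rightarrow> bool) \<Rightarrow> complex)" where
  "perm_act g f = (\<lambda>b. if b \<in> AN then f (the_inv_into AN g b) else 0)"

definition transvection :: "(nat \<Rightarrow> bool) \<Rightarrow> (nat \<Rightarrow> bool) \<Rightarrow> (nat \<Rightarrow> bool)" where
  "transvection a x = (if bN x a then vadd x a else x)"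

definition max_tot_singular :: "(nat \<Rightarrow> bool) set \<Rightarrow> bool" where
  "max_tot_singular V = (V \<subseteq> AN \<and>
     (\<exists>\<phi>. bij_betw \<phi> (F2vec 3) V \<and>
        (\<forall>x\<in>F2vec 3. \<forall>y\<in>F2vec 3. \<phi> (vadd x y) = vadd (\<phi> x) (\<phi> y)) \<and>
        (\<forall>x\<in>F2vec 3. qN (\<phi> x) = ((x 0 \<noteq> x 1) \<noteq> x 2))))"

definition is_subspace :: "(nat \<Rightarrow> bool) set \<Rightarrow> bool" where
  "is_subspace W = (W \<subseteq> AN \<and> (\<lambda>i. False) \<in> W \<and> (\<forall>x\<in>W. \<forall>y\<in>W. vadd x y \<in> W))"

definition max_tot_isotropic :: "(nat \<Rightarrow> bool) set \<Rightarrow> bool" where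
  "max_tot_isotropic W = (is_subspace W \<and> card W = 8 \<and> (\<forall>x\<in>W. \<not> qN x))"

definition indic :: "(nat \<Rightarrow> bool) set \<Rightarrow> ((nat \<Rightarrow> bool) \<Rightarrow> complex)" where
  "indic W = (\<lambda>x. if x \<in> W then 1 else 0)"

text \<open>f_V = sum_{a in I+} e_a - sum_{a in I-} e_a.\<close>
definition fV :: "(nat \<Rightarrow> bool) set \<Rightarrow> (nat \<Rightarrow> bool) set \<Rightarrow> ((nat \<Rightarrow> bool) \<Rightarrow> complex)" where
  "fV Wp Wm = (\<lambda>x. indic Wp x - indic Wm x)"

definition acts_as_minus_one :: "(nat \<Rightarrow> bool) set \<Rightarrow> ((nat \<Rightarrow> bool) \<Rightarrow> complex) \<Rightarrow> bool" where
  "acts_as_minus_one V f = (\<forall>a\<in>V. qN a \<longrightarrow> perm_act (transvection a) f = (\<lambda>x. - f x))"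

end

theory Submission
  imports Defs
begin

(*
  A maximal totally isotropic subspace W of A_N (8 of 64 elements) is its own orthogonal,
  so the character sum sum_{a in W} (-1)^{b(x,a)} is 8 on W and 0 off W: S fixes the
  indicator of W, and T fixes it because q vanishes on W.

  With I = ker(q|V), the orthogonal of I has 16 elements and is the disjoint union of
  I, I+ - I, I- - I and V - I. A transvection t_a with a in V - I fixes I and maps I+ into
  I-, so it exchanges I+ - I and I- - I and acts on f_V as -1. Conversely, if every such t_a
  acts on g as -1, then g vanishes at each x orthogonal to some a in V - I (as t_a x = x);
  the remaining points are exactly (I+ u I-) - I. For y, y' in I+ - I one has
  t_{a'} y = t_a y' with a' = a + y + y', so g is constant on I+ - I, and t_a carries
  I- - I into I+ - I, so g takes the opposite value there.
*)

definition vzero :: "nat \<Rightarrow> bool" where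
  "vzero = (\<lambda>i. False)"

lemma vadd_self [simp]: "vadd x x = vzero"
  unfolding vadd_def vzero_def by simp

lemma vadd_cancel [simp]: "vadd x (vadd x y) = y" "vadd (vadd y x) x = y"
  unfolding vadd_def by auto

lemma bN_unfold:
  "bN x y = ((((x 0 \<and> y 1) \<noteq> (x 1 \<and> y 0)) \<noteq> ((x 2 \<and> y 3) \<noteq> (x 3 \<and> y 2)))
    \<noteq> ((x 4 \<and> y 5) \<noteq> (x 5 \<and> y 4)))"
  unfolding bN_def qN_def vadd_def by argo

lemma bN_sym: "bN x y = bN y x"
  unfolding bN_unfold by argo

lemma bN_vadd_left: "bN (vadd x y) z = (bN x z \<noteq> bN y z)"
  unfolding bN_unfold vadd_def by argo

lemma bN_vadd_right: "bN z (vadd x y) = (bN z x \<noteq> bN z y)"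
  using bN_vadd_left bN_sym by metis

lemma bN_self [simp]: "\<not> bN x x"
  unfolding bN_unfold by argo

lemma bN_vzero [simp]: "\<not> bN vzero x" "\<not> bN x vzero"
  unfolding bN_unfold vzero_def by simp_all

lemma qN_vadd: "qN (vadd x y) = ((qN x \<noteq> qN y) \<noteq> bN x y)"
  unfolding bN_def by auto

lemma qN_vzero [simp]: "\<not> qN vzero"
  unfolding qN_def vzero_def by simp

lemma F2vec_vadd: "x \<in> F2vec n \<Longrightarrow> y \<in> F2vec n \<Longrightarrow> vadd x y \<in> F2vec n"
  unfolding F2vec_def vadd_def by auto

lemma vzero_F2vec: "vzero \<in> F2vec n"
  unfolding F2vec_def vzero_def by simp

lemma card_F2vec: "card (F2vec n) = 2 ^ n" and finite_F2vec: "finite (F2vec n)"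
proof -
  have "bij_betw (\<lambda>S i. i \<in> S) (Pow {0..<n}) (F2vec n)"
    by (rule bij_betw_byWitness[where f' = "\<lambda>x. {i. x i}"])
       (auto simp: F2vec_def not_le[symmetric])
  then show "card (F2vec n) = 2 ^ n" "finite (F2vec n)"
    using bij_betw_same_card bij_betw_finite by (fastforce simp: card_Pow)+
qed

lemma card_AN: "card AN = 64" and finite_AN: "finite AN"
  unfolding AN_def using card_F2vec[of 6] finite_F2vec[of 6] by simp_all

lemma bN_nondegenerate:
  assumes b: "b \<in> AN" and orth: "\<forall>a\<in>AN. \<not> bN b a"
  shows "b = vzero"
proof
  fix i
  have unit: "(\<lambda>j. j = k) \<in> AN" if "k < 6" for k
    using that by (simp add: AN_def F2vec_def)
  have "\<not> bN b (\<lambda>j. j = k)" if "k < 6" for k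
    using orth unit[OF that] by blast
  from this[of 0] this[of 1] this[of 2] this[of 3] this[of 4] this[of 5]
  have "\<not> b i" if "i < 6"
    using that by (auto simp: bN_unfold less_Suc_eq numeral_eq_Suc)
  with b show "b i = vzero i"
    unfolding AN_def F2vec_def vzero_def by (cases "i < 6") auto
qed

lemma subspace_vzero: "is_subspace W \<Longrightarrow> vzero \<in> W"
  unfolding is_subspace_def vzero_def by simp

lemma subspace_vadd: "is_subspace W \<Longrightarrow> x \<in> W \<Longrightarrow> y \<in> W \<Longrightarrow> vadd x y \<in> W"
  unfolding is_subspace_def by simp

lemma subspace_AN: "is_subspace W \<Longrightarrow> W \<subseteq> AN"
  unfolding is_subspace_def by simp

lemma finite_subspace: "is_subspace W \<Longrightarrow> finite W"
  using finite_AN finite_subset subspace_AN by blast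

lemma is_subspace_AN: "is_subspace AN"
  unfolding is_subspace_def AN_def using F2vec_vadd vzero_F2vec by (simp add: vzero_def)

lemma sum_sgn2_bN_subspace:
  assumes W: "is_subspace W"
  shows "(\<Sum>a\<in>W. sgn2 (bN b a)) = (if \<forall>a\<in>W. \<not> bN b a then of_nat (card W) else 0)"
proof (cases "\<forall>a\<in>W. \<not> bN b a")
  case False
  then obtain a0 where a0: "a0 \<in> W" "bN b a0" by blast
  have "bij_betw (vadd a0) W W"
    by (rule bij_betw_byWitness[where f' = "vadd a0"]) (auto intro: subspace_vadd[OF W a0(1)])
  then have "(\<Sum>a\<in>W. sgn2 (bN b a)) = (\<Sum>a\<in>W. sgn2 (bN b (vadd a0 a)))"
    using sum.reindex_bij_betw[of "vadd a0" W W "\<lambda>a. sgn2 (bN b a)"] by simp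
  also have "\<dots> = (\<Sum>a\<in>W. - sgn2 (bN b a))"
    using a0(2) by (intro sum.cong) (auto simp: bN_vadd_right sgn2_def)
  also have "\<dots> = - (\<Sum>a\<in>W. sgn2 (bN b a))"
    by (rule sum_negf)
  finally show ?thesis using False by auto
qed (simp add: sgn2_def)

definition perp :: "(nat \<Rightarrow> bool) set \<Rightarrow> (nat \<Rightarrow> bool) set" where
  "perp W = {b \<in> AN. \<forall>a\<in>W. \<not> bN b a}"

lemma subset_perp:
  assumes "W \<subseteq> AN" "\<And>x y. x \<in> W \<Longrightarrow> y \<in> W \<Longrightarrow> \<not> bN x y" "X \<subseteq> W"
  shows "W \<subseteq> perp X"
  using assms by (auto simp: perp_def)

lemma subspace_perp: "is_subspace (perp W)"
  unfolding is_subspace_def perp_def AN_def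
  using F2vec_vadd vzero_F2vec by (auto simp: bN_vadd_left vzero_def[symmetric])

lemma card_mult_card_perp:
  assumes W: "is_subspace W"
  shows "card W * card (perp W) = card AN"
proof -
  have "(of_nat (card W * card (perp W)) :: complex) = (\<Sum>b\<in>perp W. of_nat (card W))"
    by simp
  also have "\<dots> = (\<Sum>b\<in>AN. \<Sum>a\<in>W. sgn2 (bN b a))"
    by (simp add: sum_sgn2_bN_subspace[OF W] sum.If_cases[OF finite_AN] perp_def Int_def)
  also have "\<dots> = (\<Sum>a\<in>W. \<Sum>b\<in>AN. sgn2 (bN a b))"
    by (subst sum.swap) (simp add: bN_sym)
  also have "\<dots> = (\<Sum>a\<in>W. if a = vzero then of_nat (card AN) else 0)"
    using subspace_AN[OF W]
    by (intro sum.cong refl) (auto simp: sum_sgn2_bN_subspace[OF is_subspace_AN] dest: bN_nondegenerate)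
  also have "\<dots> = of_nat (card AN)"
    using finite_subspace[OF W] subspace_vzero[OF W] by simp
  finally show ?thesis
    by (simp only: of_nat_eq_iff)
qed

lemma max_tot_isotropic_subspace: "max_tot_isotropic W \<Longrightarrow> is_subspace W"
  unfolding max_tot_isotropic_def by simp

lemma max_tot_isotropic_qN: "max_tot_isotropic W \<Longrightarrow> x \<in> W \<Longrightarrow> \<not> qN x"
  unfolding max_tot_isotropic_def by simp

lemma max_tot_isotropic_AN: "max_tot_isotropic W \<Longrightarrow> W \<subseteq> AN"
  unfolding max_tot_isotropic_def is_subspace_def by simp

lemma max_tot_isotropic_bN:
  assumes "max_tot_isotropic W" "x \<in> W" "y \<in> W"
  shows "\<not> bN x y"
  using assms max_tot_isotropic_qN[OF assms(1)] subspace_vadd[OF max_tot_isotropic_subspace]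
  by (metis qN_vadd)

lemma perp_max_tot_isotropic:
  assumes W: "max_tot_isotropic W"
  shows "perp W = W"
proof -
  have S: "is_subspace W" and card_W: "card W = 8"
    using W by (simp_all add: max_tot_isotropic_def)
  have "W \<subseteq> perp W"
    using max_tot_isotropic_bN[OF W] subspace_AN[OF S] by (auto simp: perp_def)
  moreover have "card (perp W) = card W"
    using card_mult_card_perp[OF S] card_AN card_W by simp
  ultimately show ?thesis
    by (metis card_subset_eq finite_subspace subspace_perp)
qed

lemma weilS_indic_max_tot_isotropic:
  assumes W: "max_tot_isotropic W"
  shows "weilS (indic W) = indic W"
proof
  fix b
  have S: "is_subspace W" and card_W: "card W = 8"
    using W by (simp_all add: max_tot_isotropic_def)
  have "(\<Sum>a\<in>AN. sgn2 (bN b a) * indic W a) = (\<Sum>a\<in>AN. if a \<in> W then sgn2 (bN b a) else 0)"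
    by (intro sum.cong) (simp_all add: indic_def)
  also have "\<dots> = (\<Sum>a\<in>W. sgn2 (bN b a))"
    using subspace_AN[OF S] by (simp add: sum.inter_restrict[OF finite_AN, symmetric] Int_absorb1)
  also have "\<dots> = (if b \<in> perp W then 8 else 0)" if "b \<in> AN"
    using that card_W by (simp add: sum_sgn2_bN_subspace[OF S] perp_def)
  finally show "weilS (indic W) b = indic W b"
    using subspace_AN[OF S] perp_max_tot_isotropic[OF W] by (auto simp: weilS_def indic_def)
qed

lemma weilT_indic_max_tot_isotropic:
  assumes W: "max_tot_isotropic W"
  shows "weilT (indic W) = indic W"
  using max_tot_isotropic_qN[OF W] max_tot_isotropic_AN[OF W]
  by (auto simp: weilT_def indic_def sgn2_def fun_eq_iff)

lemma fV_CA: "max_tot_isotropic Wp \<Longrightarrow> max_tot_isotropic Wm \<Longrightarrow> fV Wp Wm \<in> CA"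
  using max_tot_isotropic_AN by (fastforce simp: CA_def fV_def indic_def)

lemma SL2Z_invariant_fV:
  assumes Wp: "max_tot_isotropic Wp" and Wm: "max_tot_isotropic Wm"
  shows "SL2Z_invariant (fV Wp Wm)"
proof -
  have "weilS (fV Wp Wm) = (\<lambda>b. weilS (indic Wp) b - weilS (indic Wm) b)"
    by (simp add: weilS_def fV_def fun_eq_iff right_diff_distrib sum_subtractf)
  then have S: "weilS (fV Wp Wm) = fV Wp Wm"
    by (simp add: weilS_indic_max_tot_isotropic[OF Wp] weilS_indic_max_tot_isotropic[OF Wm] fV_def)
  have "weilT (fV Wp Wm) = (\<lambda>b. weilT (indic Wp) b - weilT (indic Wm) b)"
    by (simp add: weilT_def fV_def fun_eq_iff right_diff_distrib)
  then have T: "weilT (fV Wp Wm) = fV Wp Wm"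
    by (simp add: weilT_indic_max_tot_isotropic[OF Wp] weilT_indic_max_tot_isotropic[OF Wm] fV_def)
  have "g (fV Wp Wm) = fV Wp Wm" if "g \<in> weil_image" for g
    using that by induction (simp_all add: S T)
  then show ?thesis
    using fV_CA[OF Wp Wm] by (simp add: SL2Z_invariant_def)
qed

lemma fV_eq_zero_iff: "fV Wp Wm = (\<lambda>x. 0) \<longleftrightarrow> Wp = Wm"
  by (auto simp: fV_def indic_def fun_eq_iff split: if_splits)

lemma transvection_involutive [simp]: "transvection a (transvection a x) = x"
  unfolding transvection_def by (simp add: bN_vadd_left)

lemma transvection_AN: "a \<in> AN \<Longrightarrow> x \<in> AN \<Longrightarrow> transvection a x \<in> AN"
  unfolding transvection_def AN_def by (simp add: F2vec_vadd)

lemma perm_act_transvection: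
  assumes a: "a \<in> AN"
  shows "perm_act (transvection a) f = (\<lambda>x. if x \<in> AN then f (transvection a x) else 0)"
proof -
  have "inj_on (transvection a) AN"
    by (metis inj_onI transvection_involutive)
  then have "the_inv_into AN (transvection a) x = transvection a x" if "x \<in> AN" for x
    using that by (intro the_inv_into_f_eq) (simp_all add: transvection_AN[OF a])
  then show ?thesis
    by (intro ext) (simp add: perm_act_def)
qed

lemma acts_as_minus_one_iff:
  assumes V: "V \<subseteq> AN" and f: "f \<in> CA"
  shows "acts_as_minus_one V f \<longleftrightarrow> (\<forall>a\<in>V. qN a \<longrightarrow> (\<forall>x\<in>AN. f (transvection a x) = - f x))"
proof -
  have outside: "f x = 0" if "x \<notin> AN" for x
    using f that by (simp add: CA_def)
  have "perm_act (transvection a) f = (\<lambda>x. - f x) \<longleftrightarrow> (\<forall>x\<in>AN. f (transvection a x) = - f x)"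
    if "a \<in> V" for a
    unfolding perm_act_transvection[OF subsetD[OF V that]] fun_eq_iff
    by (metis outside neg_0_equal_iff_equal)
  then show ?thesis
    by (simp add: acts_as_minus_one_def)
qed

lemma max_tot_singular_props:
  assumes "max_tot_singular V"
  shows max_tot_singular_subspace: "is_subspace V"
    and max_tot_singular_bN: "\<And>x y. x \<in> V \<Longrightarrow> y \<in> V \<Longrightarrow> \<not> bN x y"
    and card_max_tot_singular: "card V = 8"
    and max_tot_singular_anisotropic: "\<exists>a\<in>V. qN a"
proof -
  obtain \<phi> where V_AN: "V \<subseteq> AN" and bij: "bij_betw \<phi> (F2vec 3) V"
    and add_all: "\<forall>x\<in>F2vec 3. \<forall>y\<in>F2vec 3. \<phi> (vadd x y) = vadd (\<phi> x) (\<phi> y)"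
    and q_all: "\<forall>x\<in>F2vec 3. qN (\<phi> x) = ((x 0 \<noteq> x 1) \<noteq> x 2)"
    using assms unfolding max_tot_singular_def by (elim conjE exE) (rule that)
  note add = add_all[rule_format] and q = q_all[rule_format]
  have V: "V = \<phi> ` F2vec 3"
    using bij by (simp add: bij_betw_def)
  have "\<phi> vzero = vzero"
    using add[OF vzero_F2vec vzero_F2vec] by simp
  then have "vzero \<in> V"
    using vzero_F2vec unfolding V by force
  moreover have "vadd x y \<in> V" if xy: "x \<in> V" "y \<in> V" for x y
  proof -
    obtain u w where u: "u \<in> F2vec 3" "x = \<phi> u" and w: "w \<in> F2vec 3" "y = \<phi> w"
      using xy V by blast
    show ?thesis
      using imageI[OF F2vec_vadd[OF u(1) w(1)], of \<phi>] add[OF u(1) w(1)] u(2) w(2) V by simp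
  qed
  ultimately show "is_subspace V"
    using V_AN by (simp add: is_subspace_def vzero_def)
  show "\<not> bN x y" if xy: "x \<in> V" "y \<in> V" for x y
  proof -
    obtain u w where u: "u \<in> F2vec 3" "x = \<phi> u" and w: "w \<in> F2vec 3" "y = \<phi> w"
      using xy V by blast
    have qxy: "qN (vadd x y) = ((vadd u w 0 \<noteq> vadd u w 1) \<noteq> vadd u w 2)"
      using add u w q[OF F2vec_vadd[OF u(1) w(1)]] by simp
    have qx: "qN x = ((u 0 \<noteq> u 1) \<noteq> u 2)" and qy: "qN y = ((w 0 \<noteq> w 1) \<noteq> w 2)"
      using q u w by simp_all
    show ?thesis
      unfolding bN_def qxy qx qy unfolding vadd_def by argo
  qed
  show "card V = 8"
    using bij_betw_same_card[OF bij] card_F2vec[of 3] by simp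
  have e0: "(\<lambda>j. j = 0) \<in> F2vec 3"
    by (simp add: F2vec_def)
  moreover have "qN (\<phi> (\<lambda>j. j = 0))"
    using q[OF e0] by simp
  ultimately show "\<exists>a\<in>V. qN a"
    unfolding V by blast
qed

lemma card_Un_coset:
  assumes I: "is_subspace I" and y: "y \<notin> I"
  shows "card (I \<union> vadd y ` I) = 2 * card I"
proof -
  have "vadd y i \<notin> I" if "i \<in> I" for i
    using y subspace_vadd[OF I _ that] by fastforce
  then have "I \<inter> vadd y ` I = {}"
    by blast
  moreover have "inj_on (vadd y) I"
    by (metis inj_onI vadd_cancel(1))
  ultimately show ?thesis
    using finite_subspace[OF I] by (simp add: card_Un_disjoint card_image)
qed

lemma subspace_eq_Un_coset:
  assumes I: "is_subspace I" and W: "is_subspace W" and IW: "I \<subseteq> W"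
    and card_W: "card W = 2 * card I" and y: "y \<in> W" "y \<notin> I"
  shows "W = I \<union> vadd y ` I"
proof -
  have "I \<union> vadd y ` I \<subseteq> W"
    using IW y(1) subspace_vadd[OF W] by auto
  then show ?thesis
    using card_Un_coset[OF I y(2)] card_W finite_subspace[OF W] by (metis card_subset_eq)
qed

(* Wp and Wm are the subspaces I+ and I- of the informal statement. *)
locale lagrangian_pair =
  fixes V Wp Wm :: "(nat \<Rightarrow> bool) set"
  assumes V: "max_tot_singular V"
    and Wp: "max_tot_isotropic Wp" and Wm: "max_tot_isotropic Wm"
    and I_Wp: "{a\<in>V. \<not> qN a} \<subseteq> Wp" and I_Wm: "{a\<in>V. \<not> qN a} \<subseteq> Wm"
    and Wp_neq_Wm: "Wp \<noteq> Wm"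
begin

definition I :: "(nat \<Rightarrow> bool) set" where
  "I = {a\<in>V. \<not> qN a}"

lemma V_subspace: "is_subspace V"
  and V_bN: "x \<in> V \<Longrightarrow> y \<in> V \<Longrightarrow> \<not> bN x y"
  and card_V: "card V = 8"
  using max_tot_singular_props[OF V] by simp_all

lemma I_subset_Wp: "I \<subseteq> Wp" and I_subset_Wm: "I \<subseteq> Wm"
  using I_Wp I_Wm by (simp_all add: I_def)

lemma I_subspace: "is_subspace I"
  using V_subspace subspace_vadd[OF V_subspace] V_bN
  by (auto simp: is_subspace_def I_def qN_vadd vzero_def[symmetric])

lemma vadd_anisotropic_I: "a \<in> V - I \<Longrightarrow> i \<in> I \<Longrightarrow> vadd a i \<in> V - I"
  using subspace_vadd[OF V_subspace] V_bN by (auto simp: I_def qN_vadd)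

lemma vadd_anisotropic_anisotropic: "a \<in> V - I \<Longrightarrow> b \<in> V - I \<Longrightarrow> vadd a b \<in> I"
  using subspace_vadd[OF V_subspace] V_bN by (auto simp: I_def qN_vadd)

lemma anisotropic_exists: "\<exists>a0. a0 \<in> V - I"
  using max_tot_singular_anisotropic[OF V] by (auto simp: I_def)

lemma card_I: "card I = 4"
proof -
  obtain a0 where a0: "a0 \<in> V - I"
    using anisotropic_exists by blast
  have "V = I \<union> vadd a0 ` I"
  proof
    show "I \<union> vadd a0 ` I \<subseteq> V"
      using vadd_anisotropic_I[OF a0] by (auto simp: I_def)
    show "V \<subseteq> I \<union> vadd a0 ` I"
      using vadd_anisotropic_anisotropic[OF a0] by (force simp: I_def)
  qed
  then show ?thesis
    using card_Un_coset[OF I_subspace, of a0] a0 card_V by simp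
qed

lemma max_tot_isotropic_eq_Un_coset:
  assumes "max_tot_isotropic W" "I \<subseteq> W" "y \<in> W - I"
  shows "W = I \<union> vadd y ` I"
  using assms card_I
  by (intro subspace_eq_Un_coset[OF I_subspace]) (auto simp: max_tot_isotropic_def)

lemma Wp_Int_Wm: "Wp \<inter> Wm = I"
proof (rule ccontr)
  assume "Wp \<inter> Wm \<noteq> I"
  then obtain y where y: "y \<in> Wp \<inter> Wm - I"
    using I_subset_Wp I_subset_Wm by blast
  then have "Wp = Wm"
    using max_tot_isotropic_eq_Un_coset[OF Wp I_subset_Wp, of y]
      max_tot_isotropic_eq_Un_coset[OF Wm I_subset_Wm, of y] by simp
  with Wp_neq_Wm show False ..
qed

lemma perp_I_eq: "perp I = Wp \<union> Wm \<union> (V - I)"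
proof -
  have fin: "finite Wp" "finite Wm" "finite V" "finite I"
    using Wp Wm V_subspace I_subspace by (simp_all add: finite_subspace max_tot_isotropic_subspace)
  have "card (Wp \<union> Wm) = 12"
    using card_Un_Int[OF fin(1,2)] Wp_Int_Wm card_I Wp Wm by (simp add: max_tot_isotropic_def)
  moreover have "card (V - I) = 4"
    using card_Diff_subset[OF fin(4)] card_V card_I by (simp add: I_def)
  moreover have "(Wp \<union> Wm) \<inter> (V - I) = {}"
    using max_tot_isotropic_qN[OF Wp] max_tot_isotropic_qN[OF Wm] by (auto simp: I_def)
  ultimately have "card (Wp \<union> Wm \<union> (V - I)) = 16"
    using fin by (simp add: card_Un_disjoint)
  also have "\<dots> = card (perp I)"
    using card_mult_card_perp[OF I_subspace] card_I card_AN by simp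
  finally have card_eq: "card (Wp \<union> Wm \<union> (V - I)) = card (perp I)" .
  have "Wp \<subseteq> perp I" "Wm \<subseteq> perp I" "V \<subseteq> perp I"
    using subset_perp[OF max_tot_isotropic_AN[OF Wp] max_tot_isotropic_bN[OF Wp] I_subset_Wp]
      subset_perp[OF max_tot_isotropic_AN[OF Wm] max_tot_isotropic_bN[OF Wm] I_subset_Wm]
      subset_perp[OF subspace_AN[OF V_subspace] V_bN] by (simp_all add: I_def)
  then have "Wp \<union> Wm \<union> (V - I) \<subseteq> perp I"
    by blast
  from card_subset_eq[OF finite_subspace[OF subspace_perp] this card_eq] show ?thesis
    by simp
qed

lemma transvection_I: "a \<in> V \<Longrightarrow> i \<in> I \<Longrightarrow> transvection a i = i"
  using V_bN by (simp add: transvection_def I_def)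

lemma transvection_Wp:
  assumes a: "a \<in> V - I" and x: "x \<in> Wp"
  shows "transvection a x \<in> Wm"
proof -
  have "x \<in> perp I" "a \<in> perp I"
    using x a perp_I_eq by auto
  then have xa: "vadd x a \<in> perp I"
    using subspace_vadd[OF subspace_perp] by blast
  have qx: "\<not> qN x" and qa: "qN a"
    using max_tot_isotropic_qN[OF Wp x] a by (simp_all add: I_def)
  show ?thesis
  proof (cases "bN x a")
    case True
    have "vadd x a \<notin> Wp"
    proof
      assume "vadd x a \<in> Wp"
      then have "vadd x (vadd x a) \<in> Wp"
        by (rule subspace_vadd[OF max_tot_isotropic_subspace[OF Wp] x])
      with qa show False
        using max_tot_isotropic_qN[OF Wp] by simp
    qed
    moreover have "\<not> qN (vadd x a)"
      using True qx qa by (simp add: qN_vadd)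
    ultimately have "vadd x a \<in> Wm"
      using xa[unfolded perp_I_eq] by (auto simp: I_def)
    with True show ?thesis
      by (simp add: transvection_def)
  next
    case False
    then have "qN (vadd x a)"
      using qx qa by (simp add: qN_vadd)
    then have "vadd x a \<in> V - I"
      using xa[unfolded perp_I_eq] max_tot_isotropic_qN[OF Wp] max_tot_isotropic_qN[OF Wm] by blast
    then have "x \<in> I"
      using subspace_vadd[OF V_subspace, of "vadd x a" a] a qx by (simp add: I_def)
    with False I_subset_Wm show ?thesis
      by (auto simp: transvection_def)
  qed
qed

lemma transvection_Wp_diff_I:
  assumes a: "a \<in> V - I" and x: "x \<in> Wp - I"
  shows "transvection a x \<in> Wm - I"
proof -
  have "transvection a x \<notin> I"
    using transvection_I[of a "transvection a x"] a x by auto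
  with transvection_Wp[OF a] x show ?thesis
    by blast
qed

lemma bN_Wp_anisotropic:
  assumes x: "x \<in> Wp - I" and a: "a \<in> V - I"
  shows "bN x a"
proof (rule ccontr)
  assume "\<not> bN x a"
  then have "x \<in> Wm"
    using transvection_Wp[OF a, of x] x by (simp add: transvection_def)
  with x Wp_Int_Wm show False
    by blast
qed

lemma vadd_Wp_diff_I:
  assumes y: "y \<in> Wp - I" and y': "y' \<in> Wp - I"
  shows "vadd y y' \<in> I"
proof -
  obtain i where "i \<in> I" "y' = vadd y i"
    using y' max_tot_isotropic_eq_Un_coset[OF Wp I_subset_Wp y] by blast
  then show ?thesis
    by simp
qed

lemma mem_Wp_Un_Wm_if_bN_anisotropic:
  assumes x: "x \<in> AN" and bN_x: "\<And>a. a \<in> V - I \<Longrightarrow> bN x a"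
  shows "x \<in> (Wp \<union> Wm) - I"
proof -
  obtain a0 where a0: "a0 \<in> V - I"
    using anisotropic_exists by blast
  have "\<not> bN x i" if "i \<in> I" for i
    using bN_x[OF vadd_anisotropic_I[OF a0 that]] bN_x[OF a0] by (simp add: bN_vadd_right)
  then have "x \<in> perp I"
    using x by (simp add: perp_def)
  moreover have "x \<notin> V"
    using bN_x[OF a0] V_bN a0 by blast
  moreover have "I \<subseteq> V"
    by (simp add: I_def)
  ultimately show ?thesis
    unfolding perp_I_eq by blast
qed

lemma minus_one_eigenvector_const_Wp:
  fixes g :: "(nat \<Rightarrow> bool) \<Rightarrow> 'a::group_add"
  assumes flip: "\<And>a x. a \<in> V - I \<Longrightarrow> x \<in> AN \<Longrightarrow> g (transvection a x) = - g x"
    and y: "y \<in> Wp - I" and y': "y' \<in> Wp - I"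
  shows "g y = g y'"
proof -
  obtain a where a: "a \<in> V - I"
    using anisotropic_exists by blast
  define a' where "a' = vadd a (vadd y y')"
  have a': "a' \<in> V - I"
    unfolding a'_def using vadd_anisotropic_I[OF a vadd_Wp_diff_I[OF y y']] .
  have "vadd y a' = vadd y' a"
    unfolding a'_def vadd_def by (rule ext) argo
  then have t: "transvection a' y = transvection a y'"
    using bN_Wp_anisotropic[OF y a'] bN_Wp_anisotropic[OF y' a] by (simp add: transvection_def)
  have "y \<in> AN" "y' \<in> AN"
    using y y' max_tot_isotropic_AN[OF Wp] by auto
  then have "- g y = - g y'"
    using flip[OF a' \<open>y \<in> AN\<close>] flip[OF a \<open>y' \<in> AN\<close>] t by simp
  then show ?thesis
    by simp
qed

end

sublocale lagrangian_pair \<subseteq> swapped: lagrangian_pair V Wm Wp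
  using V Wp Wm I_Wp I_Wm Wp_neq_Wm by unfold_locales simp_all

context lagrangian_pair
begin

lemma transvection_mem_Wp_iff: "a \<in> V - I \<Longrightarrow> transvection a x \<in> Wp \<longleftrightarrow> x \<in> Wm"
  using transvection_Wp swapped.transvection_Wp by (metis transvection_involutive)

lemma transvection_mem_Wm_iff: "a \<in> V - I \<Longrightarrow> transvection a x \<in> Wm \<longleftrightarrow> x \<in> Wp"
  using transvection_Wp swapped.transvection_Wp by (metis transvection_involutive)

lemma acts_as_minus_one_fV: "acts_as_minus_one V (fV Wp Wm)"
proof -
  have "fV Wp Wm (transvection a x) = - fV Wp Wm x" if "a \<in> V - I" for a x
    using transvection_mem_Wp_iff[OF that] transvection_mem_Wm_iff[OF that]
    by (simp add: fV_def indic_def)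
  then show ?thesis
    using fV_CA[OF Wp Wm] subspace_AN[OF V_subspace]
    by (simp add: acts_as_minus_one_iff I_def)
qed

lemma Wp_diff_I_nonempty: "\<exists>w. w \<in> Wp - I"
proof (rule ccontr)
  assume "\<nexists>w. w \<in> Wp - I"
  then have "card Wp \<le> card I"
    by (intro card_mono[OF finite_subspace[OF I_subspace]]) blast
  with Wp card_I show False
    by (simp add: max_tot_isotropic_def)
qed

lemma minus_one_eigenvector_unique:
  assumes g: "g \<in> CA" and g_minus_one: "acts_as_minus_one V g"
  shows "\<exists>c. g = (\<lambda>x. c * fV Wp Wm x)"
proof -
  have flip: "g (transvection a x) = - g x" if "a \<in> V - I" "x \<in> AN" for a x
    using g_minus_one that acts_as_minus_one_iff[OF subspace_AN[OF V_subspace] g] by (simp add: I_def)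
  obtain w0 where w0: "w0 \<in> Wp - I"
    using Wp_diff_I_nonempty by blast
  obtain a0 where a0: "a0 \<in> V - I"
    using anisotropic_exists by blast
  have on_Wp: "g y = g w0" if "y \<in> Wp - I" for y
    using minus_one_eigenvector_const_Wp[OF flip that w0] .
  have on_Wm: "g y = - g w0" if y: "y \<in> Wm - I" for y
  proof -
    have "y \<in> AN"
      using y max_tot_isotropic_AN[OF Wm] by blast
    then have "g y = - g (transvection a0 y)"
      using flip[OF a0] by simp
    also have "\<dots> = - g w0"
      using on_Wp swapped.transvection_Wp_diff_I[OF a0 y] by simp
    finally show ?thesis .
  qed
  have elsewhere: "g x = 0" if x: "x \<in> AN" "x \<notin> (Wp \<union> Wm) - I" for x
  proof -
    obtain a where a: "a \<in> V - I" "\<not> bN x a"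
      using mem_Wp_Un_Wm_if_bN_anisotropic x by blast
    then have "g x = - g x"
      using flip[OF a(1) x(1)] by (simp add: transvection_def)
    then show ?thesis
      by simp
  qed
  have "g x = g w0 * fV Wp Wm x" for x
  proof (cases "x \<in> AN")
    case True
    consider "x \<in> Wp - I" | "x \<in> Wm - I" | "x \<notin> (Wp \<union> Wm) - I"
      by blast
    then show ?thesis
      by cases (use on_Wp on_Wm elsewhere[OF True] Wp_Int_Wm in \<open>auto simp: fV_def indic_def\<close>)
  next
    case False
    then show ?thesis
      using g max_tot_isotropic_AN[OF Wp] max_tot_isotropic_AN[OF Wm]
      by (auto simp: fV_def indic_def CA_def)
  qed
  then show ?thesis
    by blast
qed

end

theorem theorem5p4:
  assumes V: "max_tot_singular V"
    and Wp: "max_tot_isotropic Wp" and Wm: "max_tot_isotropic Wm"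
    and WpI: "{a\<in>V. \<not> qN a} \<subseteq> Wp" and WmI: "{a\<in>V. \<not> qN a} \<subseteq> Wm"
    and ne: "Wp \<noteq> Wm"
  shows "SL2Z_invariant (fV Wp Wm)
    \<and> fV Wp Wm \<noteq> (\<lambda>x. 0)
    \<and> acts_as_minus_one V (fV Wp Wm)
    \<and> (\<forall>g\<in>CA. acts_as_minus_one V g \<longrightarrow> (\<exists>c::complex. g = (\<lambda>x. c * fV Wp Wm x)))"
proof -
  interpret lagrangian_pair V Wp Wm
    using assms by unfold_locales
  have "fV Wp Wm \<noteq> (\<lambda>x. 0)"
    using ne by (simp add: fV_eq_zero_iff)
  then show ?thesis
    by (intro conjI ballI impI SL2Z_invariant_fV[OF Wp Wm] acts_as_minus_one_fV
        minus_one_eigenvector_unique)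
qed

end
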